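(* For every integer $m\ge2$ and every $\alpha\in[0,1]$, no randomized social choice rule on $m$ candidates has distortion smaller than $\frac{3+\alpha}{2}-\frac{1-\alpha}{\lfloor m\rfloor_{\mathrm{even}}}$ on $\alpha$-decisive metric spaces, where $\lfloor m\rfloor_{\mathrm{even}}$ is the largest even integer at most $m$.
   Context: An election: voters $V=\{1,\dots,n\}$, a fixed finite set $C$ of $m$ candidates, a profile $\sigma$ of linear orders over $C$; $\mathrm{top}(i)$ is $i$'s first choice. A distance function $d$ on $V\cup C$ is nonnegative, symmetric and satisfies the triangle inequality (co-location allowed); consistent with $\sigma$ if $d(i,c)\le d(i,c')$ whenever $i$ ranks $c$ above $c'$; $\alpha$-decisive if $d(i,\mathrm{top}(i))\le\alpha\,d(i,c)$ for all $i$ and $c\ne\mathrm{top}(i)$. $\mathrm{SC}(c)=\sum_i d(i,c)$. A randomized rule maps profiles (any number of voters) to distributions over $C$; its distortion on $\alpha$-decisive spaces is $\sup_\sigma\sup_d\mathbb{E}[\mathrm{SC}(f(\sigma))]/\min_c\mathrm{SC}(c)$ over $\alpha$-decisive consistent $d$. *)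

theory Defs
  imports "HOL-Probability.Probability"
begin

text \<open>A profile over candidate set C is a list of rankings (one per voter; voter i is
  index i < length P); a ranking is a list enumerating C without repetition,
  best candidate first.  Voter i ranks c above c' iff c occurs earlier in P!i.\<close>

definition valid_profile :: "'c set \<Rightarrow> 'c list list \<Rightarrow> bool" where
  "valid_profile C P \<longleftrightarrow> (\<forall>r\<in>set P. distinct r \<and> set r = C)"

definition top :: "'c list list \<Rightarrow> nat \<Rightarrow> 'c" where
  "top P i = hd (P ! i)"

definition points :: "'c set \<Rightarrow> nat \<Rightarrow> (nat + 'c) set" where
  "points C n = Inl ` {..<n} \<union> Inr ` C"

text \<open>Distance function on a set S (pseudometric: co-location allowed).\<close>
definition distance_on :: "'a set \<Rightarrow> ('a \<Rightarrow> 'a \<Rightarrow> real) \<Rightarrow> bool" where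
  "distance_on S d \<longleftrightarrow>
     (\<forall>x\<in>S. d x x = 0) \<and>
     (\<forall>x\<in>S. \<forall>y\<in>S. 0 \<le> d x y \<and> d x y = d y x) \<and>
     (\<forall>x\<in>S. \<forall>y\<in>S. \<forall>z\<in>S. d x z \<le> d x y + d y z)"

definition consistent :: "'c list list \<Rightarrow> (nat + 'c \<Rightarrow> nat + 'c \<Rightarrow> real) \<Rightarrow> bool" where
  "consistent P d \<longleftrightarrow>
     (\<forall>i < length P. \<forall>j k. j < k \<and> k < length (P ! i) \<longrightarrow>
        d (Inl i) (Inr (P ! i ! j)) \<le> d (Inl i) (Inr (P ! i ! k)))"

definition decisive :: "real \<Rightarrow> 'c set \<Rightarrow> 'c list list \<Rightarrow> (nat + 'c \<Rightarrow> nat + 'c \<Rightarrow> real) \<Rightarrow> bool" where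
  "decisive \<alpha> C P d \<longleftrightarrow>
     (\<forall>i < length P. \<forall>c\<in>C. c \<noteq> top P i \<longrightarrow>
        d (Inl i) (Inr (top P i)) \<le> \<alpha> * d (Inl i) (Inr c))"

definition SC :: "'c list list \<Rightarrow> (nat + 'c \<Rightarrow> nat + 'c \<Rightarrow> real) \<Rightarrow> 'c \<Rightarrow> real" where
  "SC P d c = (\<Sum>i<length P. d (Inl i) (Inr c))"

definition opt_SC :: "'c set \<Rightarrow> 'c list list \<Rightarrow> (nat + 'c \<Rightarrow> nat + 'c \<Rightarrow> real) \<Rightarrow> real" where
  "opt_SC C P d = Min (SC P d ` C)"

definition floor_even :: "nat \<Rightarrow> nat" where
  "floor_even m = 2 * (m div 2)"

end

theory Submission
  imports Defs
begin

(* Let k = m div 2.  Take two disjoint blocks of k candidates each and one voter per candidate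
   of their union, who ranks that candidate first, then the rest of its own block, then the
   other block, then all remaining candidates.  Whatever lottery the rule returns on this
   profile puts probability at most 1/2 on one block; call it S and the other one T.
   Now place all voters and candidates of S at one point (the hub), each voter of T at
   distance 1 from the hub, its favourite at distance alpha from it and 1 + alpha from the hub,
   and the remaining candidates at distance 2 from everything.  This pseudometric is consistent
   with the profile and alpha-decisive; each candidate of S has social cost k, each candidate
   of T has cost 2k - 1 + (k + 1) alpha, and the others 4k.  So the optimum is k, while the
   expected cost of the lottery is at least (3k - 1 + (k + 1) alpha) / 2, which is
   ((3 + alpha)/2 - (1 - alpha)/(2k)) times the optimum. *)

lemma distance_on_pullback:
  assumes "distance_on (g ` X) d"
  shows "distance_on X (\<lambda>x y. d (g x) (g y))"
  using assms unfolding distance_on_def by blast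

lemma consistent_if_sorted:
  assumes "\<And>i. i < length P \<Longrightarrow> sorted (map (\<lambda>c. d (Inl i) (Inr c)) (P ! i))"
  shows "consistent P d"
  unfolding consistent_def
proof (intro allI impI)
  fix i j k assume "i < length P" and jk: "j < k \<and> k < length (P ! i)"
  then have "map (\<lambda>c. d (Inl i) (Inr c)) (P ! i) ! j \<le> map (\<lambda>c. d (Inl i) (Inr c)) (P ! i) ! k"
    using assms by (intro sorted_nth_mono) auto
  then show "d (Inl i) (Inr (P ! i ! j)) \<le> d (Inl i) (Inr (P ! i ! k))"
    using jk by simp
qed

lemma sorted_map_Cons_append3:
  fixes g :: "'a \<Rightarrow> 'b::linorder"
  assumes "g t \<le> a" "a \<le> b" "b \<le> c"
    and "\<forall>x\<in>set xs. g x = a" "\<forall>y\<in>set ys. g y = b" "\<forall>z\<in>set zs. g z = c"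
  shows "sorted (map g (t # xs @ ys @ zs))"
proof -
  have "map g xs = replicate (length xs) a" "map g ys = replicate (length ys) b"
    "map g zs = replicate (length zs) c"
    using assms(4-6) by (auto intro: replicate_eqI)
  then show ?thesis
    using assms(1-3) by (auto simp: sorted_append)
qed

lemma sum_nth_conv_sum_set:
  assumes "distinct L"
  shows "(\<Sum>i<length L. g (L ! i)) = (\<Sum>t\<in>set L. g t)"
proof -
  have "(\<Sum>t\<in>set L. g t) = sum_list (map g L)"
    using assms by (simp add: sum_list_distinct_conv_sum_set)
  also have "\<dots> = (\<Sum>i<length L. g (L ! i))"
    by (simp add: sum_list_sum_nth atLeast0LessThan)
  finally show ?thesis by simp
qed

lemma expectation_ge_two_levels:
  fixes p :: "'a pmf" and g :: "'a \<Rightarrow> real"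
  assumes "finite C" "set_pmf p \<subseteq> C" "S \<subseteq> C" "a \<le> b"
    and "\<And>c. c \<in> S \<Longrightarrow> a \<le> g c" "\<And>c. c \<in> C - S \<Longrightarrow> b \<le> g c"
    and "measure_pmf.prob p S \<le> 1/2"
  shows "(a + b) / 2 \<le> measure_pmf.expectation p g"
proof -
  have fin: "finite S" "finite (C - S)"
    using assms(1,3) by (auto intro: finite_subset)
  define q where "q = sum (pmf p) S"
  have q: "q \<le> 1/2"
    using assms(7) fin by (simp add: q_def measure_measure_pmf_finite)
  have rest: "sum (pmf p) (C - S) = 1 - q"
    using sum_pmf_eq_1[OF assms(1,2)] sum.subset_diff[OF assms(3,1), of "pmf p"]
    by (simp add: q_def)
  have "0 \<le> (b - a) * (1/2 - q)"
    using q assms(4) by simp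
  then have "(a + b) / 2 \<le> a * q + b * (1 - q)"
    by (simp add: algebra_simps divide_simps)
  also have "\<dots> = (\<Sum>c\<in>S. pmf p c * a) + (\<Sum>c\<in>C - S. pmf p c * b)"
    unfolding rest[symmetric] unfolding q_def by (simp add: sum_distrib_left mult.commute)
  also have "\<dots> \<le> (\<Sum>c\<in>S. pmf p c * g c) + (\<Sum>c\<in>C - S. pmf p c * g c)"
    using assms(5,6) by (intro add_mono sum_mono mult_left_mono) auto
  also have "\<dots> = (\<Sum>c\<in>C. pmf p c * g c)"
    by (simp add: sum.subset_diff[OF assms(3,1)] add.commute)
  also have "\<dots> = measure_pmf.expectation p g"
    using assms(1,2) by (subst integral_measure_pmf[of C]) auto
  finally show ?thesis .
qed

datatype 'c site = Hub | Voter_site 'c | Cand_site 'c | Far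

fun site_dist :: "real \<Rightarrow> 'c site \<Rightarrow> 'c site \<Rightarrow> real" where
  "site_dist a Hub Hub = 0"
| "site_dist a Hub (Voter_site _) = 1"
| "site_dist a Hub (Cand_site _) = 1 + a"
| "site_dist a (Voter_site _) Hub = 1"
| "site_dist a (Cand_site _) Hub = 1 + a"
| "site_dist a (Voter_site b) (Voter_site c) = (if b = c then 0 else 1 + a)"
| "site_dist a (Cand_site b) (Cand_site c) = (if b = c then 0 else 1 + a)"
| "site_dist a (Voter_site b) (Cand_site c) = (if b = c then a else 1)"
| "site_dist a (Cand_site b) (Voter_site c) = (if b = c then a else 1)"
| "site_dist a Far Far = 0"
| "site_dist a Far _ = 2"
| "site_dist a _ Far = 2"

lemma distance_on_site_dist:
  assumes "0 \<le> a" "a \<le> 1"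
  shows "distance_on UNIV (site_dist a)"
proof -
  have "site_dist a x x = 0" for x :: "'c site"
    by (cases x) auto
  moreover have "0 \<le> site_dist a x y \<and> site_dist a x y = site_dist a y x" for x y :: "'c site"
    using assms by (cases x; cases y) auto
  moreover have "site_dist a x z \<le> site_dist a x y + site_dist a y z" for x y z :: "'c site"
    using assms by (cases x; cases y; cases z) auto
  ultimately show ?thesis
    unfolding distance_on_def by blast
qed

definition block_ranking :: "'c set \<Rightarrow> 'c set \<Rightarrow> 'c \<Rightarrow> 'c list \<Rightarrow> bool" where
  "block_ranking S T t r \<longleftrightarrow>
     (\<exists>xs ys zs. r = t # xs @ ys @ zs \<and> t \<notin> set xs \<and> set zs \<inter> (S \<union> T) = {} \<and>
        ((t \<in> S \<and> set xs \<subseteq> S \<and> set ys \<subseteq> T) \<or> (t \<in> T \<and> set xs \<subseteq> T \<and> set ys \<subseteq> S)))"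

lemma block_ranking_swap: "block_ranking S T t r \<Longrightarrow> block_ranking T S t r"
  unfolding block_ranking_def by blast

locale block_profile =
  fixes C S T :: "'c set" and L :: "'c list" and P :: "'c list list"
  assumes finite_C: "finite C"
    and disjoint: "S \<inter> T = {}"
    and blocks_subset: "S \<union> T \<subseteq> C"
    and card_eq: "card T = card S"
    and nonempty: "S \<noteq> {}"
    and distinct_L: "distinct L"
    and set_L: "set L = S \<union> T"
    and length_P: "length P = length L"
    and block_rankings: "\<And>i. i < length L \<Longrightarrow> block_ranking S T (L ! i) (P ! i)"
begin

lemma finite_blocks: "finite S" "finite T"
  using finite_C blocks_subset by (auto intro: finite_subset)

lemma swap: "block_profile C T S L P"
proof
  show "T \<noteq> {}"
    using card_eq nonempty finite_blocks by auto
  show "block_ranking T S (L ! i) (P ! i)" if "i < length L" for i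
    using block_rankings[OF that] by (rule block_ranking_swap)
qed (use finite_C disjoint blocks_subset card_eq distinct_L set_L length_P in auto)

lemma top_eq: "i < length P \<Longrightarrow> top P i = L ! i"
  using block_rankings[of i] length_P unfolding block_ranking_def top_def by fastforce

lemma profile_nonempty: "P \<noteq> []"
  using nonempty set_L length_P by auto

lemma favourite_in_blocks: "i < length P \<Longrightarrow> L ! i \<in> S \<union> T"
  using length_P set_L nth_mem by metis

definition site :: "nat + 'c \<Rightarrow> 'c site" where
  "site x = (case x of
      Inl i \<Rightarrow> if L ! i \<in> S then Hub else Voter_site (L ! i)
    | Inr c \<Rightarrow> if c \<in> S then Hub else if c \<in> T then Cand_site c else Far)"

end

locale block_instance = block_profile +
  fixes \<alpha> :: real
  assumes alpha_nonneg: "0 \<le> \<alpha>" and alpha_le_1: "\<alpha> \<le> 1"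
begin

definition block_dist where
  "block_dist x y = site_dist \<alpha> (site x) (site y)"

lemma distance_on_block_dist: "distance_on X block_dist"
  unfolding block_dist_def
  by (rule distance_on_pullback)
    (use distance_on_site_dist[OF alpha_nonneg alpha_le_1] in \<open>auto simp: distance_on_def\<close>)

lemma consistent_block_dist: "consistent P block_dist"
proof (rule consistent_if_sorted)
  fix i assume i: "i < length P"
  then obtain xs ys zs where r: "P ! i = L ! i # xs @ ys @ zs" and t: "L ! i \<notin> set xs"
    and zs: "set zs \<inter> (S \<union> T) = {}"
    and blocks: "(L ! i \<in> S \<and> set xs \<subseteq> S \<and> set ys \<subseteq> T) \<or>
                 (L ! i \<in> T \<and> set xs \<subseteq> T \<and> set ys \<subseteq> S)"
    using block_rankings length_P unfolding block_ranking_def by force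
  have "sorted (map (\<lambda>c. block_dist (Inl i) (Inr c)) (L ! i # xs @ ys @ zs))"
    using blocks
  proof
    assume "L ! i \<in> S \<and> set xs \<subseteq> S \<and> set ys \<subseteq> T"
    then show ?thesis
      using zs disjoint alpha_nonneg alpha_le_1
      by (intro sorted_map_Cons_append3[where a = 0 and b = "1 + \<alpha>" and c = 2])
        (auto simp: block_dist_def site_def)
  next
    assume "L ! i \<in> T \<and> set xs \<subseteq> T \<and> set ys \<subseteq> S"
    then show ?thesis
      using t zs disjoint alpha_nonneg alpha_le_1
      by (intro sorted_map_Cons_append3[where a = 1 and b = 1 and c = 2])
        (auto simp: block_dist_def site_def)
  qed
  then show "sorted (map (\<lambda>c. block_dist (Inl i) (Inr c)) (P ! i))"
    unfolding r .
qed

lemma decisive_block_dist: "decisive \<alpha> C P block_dist"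
  unfolding decisive_def
proof (intro allI impI ballI)
  fix i c assume i: "i < length P" and "c \<in> C" and c: "c \<noteq> top P i"
  show "block_dist (Inl i) (Inr (top P i)) \<le> \<alpha> * block_dist (Inl i) (Inr c)"
  proof (cases "L ! i \<in> S")
    case True
    then show ?thesis
      using i alpha_nonneg distance_on_block_dist[of UNIV]
      by (simp add: top_eq block_dist_def site_def distance_on_def)
  next
    case False
    then have "L ! i \<in> T"
      using favourite_in_blocks i by blast
    then show ?thesis
      using i c False alpha_nonneg by (auto simp: top_eq block_dist_def site_def)
  qed
qed

lemma SC_block_dist:
  "SC P block_dist c =
     (\<Sum>t\<in>S. site_dist \<alpha> Hub (site (Inr c))) + (\<Sum>t\<in>T. site_dist \<alpha> (Voter_site t) (site (Inr c)))"
proof -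
  define g where "g t = site_dist \<alpha> (if t \<in> S then Hub else Voter_site t) (site (Inr c))" for t
  have "SC P block_dist c = (\<Sum>i<length L. g (L ! i))"
    by (simp add: SC_def length_P block_dist_def site_def g_def)
  also have "\<dots> = (\<Sum>t\<in>S. g t) + (\<Sum>t\<in>T. g t)"
    using finite_blocks disjoint
    by (simp add: sum_nth_conv_sum_set[OF distinct_L] set_L sum.union_disjoint)
  also have "(\<Sum>t\<in>T. g t) = (\<Sum>t\<in>T. site_dist \<alpha> (Voter_site t) (site (Inr c)))"
    using disjoint by (intro sum.cong) (auto simp: g_def)
  finally show ?thesis
    by (simp add: g_def)
qed

lemma SC_in_S: "c \<in> S \<Longrightarrow> SC P block_dist c = card S"
  using card_eq by (simp add: SC_block_dist site_def)

lemma SC_in_T: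
  assumes "c \<in> T"
  shows "SC P block_dist c = 2 * real (card S) - 1 + (real (card S) + 1) * \<alpha>"
proof -
  have "(\<Sum>t\<in>T. site_dist \<alpha> (Voter_site t) (Cand_site c))
      = (\<Sum>t\<in>T. 1 + (if t = c then \<alpha> - 1 else 0))"
    by (intro sum.cong) auto
  also have "\<dots> = card S + \<alpha> - 1"
    using assms finite_blocks card_eq by (simp add: sum.distrib)
  finally show ?thesis
    using assms disjoint by (auto simp: SC_block_dist site_def algebra_simps)
qed

lemma SC_outside: "c \<notin> S \<union> T \<Longrightarrow> SC P block_dist c = 4 * card S"
  using card_eq by (simp add: SC_block_dist site_def)

lemma SC_outside_S_ge:
  assumes "c \<in> C - S"
  shows "2 * real (card S) - 1 + (real (card S) + 1) * \<alpha> \<le> SC P block_dist c"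
proof (cases "c \<in> T")
  case True
  then show ?thesis by (simp add: SC_in_T)
next
  case False
  have "(real (card S) + 1) * \<alpha> \<le> real (card S) + 1"
    using alpha_le_1 by (simp add: mult_left_le)
  moreover have "SC P block_dist c = 4 * card S"
    using False assms by (simp add: SC_outside)
  ultimately show ?thesis
    by linarith
qed

lemma card_S_le_SC_T: "real (card S) \<le> 2 * real (card S) - 1 + (real (card S) + 1) * \<alpha>"
proof -
  have "1 \<le> card S"
    using nonempty finite_blocks by (simp add: Suc_le_eq card_gt_0_iff)
  then show ?thesis
    using alpha_nonneg by (simp add: add_increasing2)
qed

lemma opt_SC_block_dist: "opt_SC C P block_dist = card S"
  unfolding opt_SC_def
proof (rule Min_eqI)
  show "finite (SC P block_dist ` C)"
    using finite_C by simp
  show "real (card S) \<le> x" if "x \<in> SC P block_dist ` C" for x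
    using that SC_in_S SC_outside_S_ge card_S_le_SC_T by fastforce
  obtain s where "s \<in> S"
    using nonempty by blast
  then show "real (card S) \<in> SC P block_dist ` C"
    using SC_in_S blocks_subset by (metis UnCI image_eqI subsetD)
qed

lemma expectation_SC_ge:
  assumes "set_pmf p \<subseteq> C" and "measure_pmf.prob p S \<le> 1/2"
  shows "((3 + \<alpha>) / 2 - (1 - \<alpha>) / (2 * real (card S))) * opt_SC C P block_dist
           \<le> measure_pmf.expectation p (SC P block_dist)"
proof -
  have "0 < card S"
    using nonempty finite_blocks by (simp add: card_gt_0_iff)
  then have "((3 + \<alpha>) / 2 - (1 - \<alpha>) / (2 * real (card S))) * opt_SC C P block_dist
      = (real (card S) + (2 * real (card S) - 1 + (real (card S) + 1) * \<alpha>)) / 2"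
    by (simp add: opt_SC_block_dist field_simps)
  also have "\<dots> \<le> measure_pmf.expectation p (SC P block_dist)"
    using finite_C assms blocks_subset card_S_le_SC_T SC_in_S SC_outside_S_ge
    by (intro expectation_ge_two_levels) auto
  finally show ?thesis .
qed

end

lemma (in block_profile) obtain_light_block:
  fixes p :: "'c pmf"
  obtains S' T' where "block_profile C S' T' L P" and "card S' = card S"
    and "measure_pmf.prob p S' \<le> 1/2"
proof -
  have "measure_pmf.prob p S + measure_pmf.prob p T = measure_pmf.prob p (S \<union> T)"
    using disjoint by (simp add: measure_pmf.finite_measure_Union)
  also have "\<dots> \<le> 1"
    by (rule measure_pmf.prob_le_1)
  finally consider "measure_pmf.prob p S \<le> 1/2" | "measure_pmf.prob p T \<le> 1/2"
    by linarith
  then show thesis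
    using that[of S T] that[of T S] block_profile_axioms swap card_eq by cases auto
qed

definition block_vote :: "'c list \<Rightarrow> 'c list \<Rightarrow> 'c list \<Rightarrow> 'c \<Rightarrow> 'c list" where
  "block_vote as bs js c = c # (if c \<in> set as then remove1 c as @ bs else remove1 c bs @ as) @ js"

lemma block_vote_block_ranking:
  assumes "distinct (as @ bs @ js)" and "c \<in> set (as @ bs)"
  shows "block_ranking (set as) (set bs) c (block_vote as bs js c)"
proof (cases "c \<in> set as")
  case True
  then show ?thesis
    using assms unfolding block_vote_def block_ranking_def
    by (intro exI[of _ "remove1 c as"] exI[of _ bs] exI[of _ js]) (auto simp: set_remove1_eq)
next
  case False
  then show ?thesis
    using assms unfolding block_vote_def block_ranking_def
    by (intro exI[of _ "remove1 c bs"] exI[of _ as] exI[of _ js]) (auto simp: set_remove1_eq)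
qed

lemma block_vote_permutes:
  assumes "distinct (as @ bs @ js)" and "c \<in> set (as @ bs)"
  shows "distinct (block_vote as bs js c) \<and> set (block_vote as bs js c) = set (as @ bs @ js)"
  using assms by (auto simp: block_vote_def set_remove1_eq)

lemma block_profile_exists:
  assumes "finite C" and "0 < k" and "2 * k \<le> card C"
  obtains A B L P where "block_profile C A B L P" and "valid_profile C P" and "card A = k"
proof -
  obtain cs where cs: "distinct cs" "set cs = C"
    using finite_distinct_list[OF assms(1)] by blast
  define as bs js where "as = take k cs" and "bs = take k (drop k cs)" and "js = drop (2 * k) cs"
  have cs_eq: "as @ bs @ js = cs"
    by (simp add: as_def bs_def js_def mult_2 flip: drop_drop)
  have "length cs = card C"
    using cs distinct_card by fastforce
  then have lengths: "length as = k" "length bs = k"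
    using assms(3) by (simp_all add: as_def bs_def)
  have dist: "distinct (as @ bs @ js)"
    using cs cs_eq by simp
  define L P where "L = as @ bs" and "P = map (block_vote as bs js) L"
  show thesis
  proof (rule that)
    show "block_profile C (set as) (set bs) L P"
    proof
      show "set as \<noteq> {}"
        using lengths assms(2) by auto
      show "card (set bs) = card (set as)"
        using dist lengths by (simp add: distinct_card)
      show "block_ranking (set as) (set bs) (L ! i) (P ! i)" if "i < length L" for i
      proof -
        have "L ! i \<in> set (as @ bs)"
          using that unfolding L_def by (rule nth_mem)
        then show ?thesis
          using that block_vote_block_ranking[OF dist] by (simp add: P_def)
      qed
    qed (use assms(1) dist cs cs_eq in \<open>auto simp: L_def P_def\<close>)
    show "valid_profile C P"
      using block_vote_permutes[OF dist] cs cs_eq by (auto simp: valid_profile_def P_def L_def)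
    show "card (set as) = k"
      using dist lengths by (simp add: distinct_card)
  qed
qed

theorem theorem5:
  fixes C :: "'c set" and m :: nat and \<alpha> :: real
    and f :: "'c list list \<Rightarrow> 'c pmf"
  assumes "finite C" and "card C = m" and "m \<ge> 2"
    and "0 \<le> \<alpha>" and "\<alpha> \<le> 1"
    and "\<forall>P. valid_profile C P \<longrightarrow> set_pmf (f P) \<subseteq> C"
  shows "\<forall>B < (3 + \<alpha>) / 2 - (1 - \<alpha>) / real (floor_even m).
           \<exists>P d. valid_profile C P \<and> P \<noteq> [] \<and>
                 distance_on (points C (length P)) d \<and>
                 consistent P d \<and> decisive \<alpha> C P d \<and>
                 opt_SC C P d > 0 \<and>
                 measure_pmf.expectation (f P) (SC P d) > B * opt_SC C P d"
proof (intro allI impI)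
  fix B assume B: "B < (3 + \<alpha>) / 2 - (1 - \<alpha>) / real (floor_even m)"
  have "0 < m div 2" and "2 * (m div 2) \<le> card C"
    using assms(2,3) by auto
  then obtain A A' L P where "block_profile C A A' L P" and valid: "valid_profile C P"
    and "card A = m div 2"
    using block_profile_exists[OF assms(1)] by metis
  then obtain S T where "block_profile C S T L P" and card_S: "card S = m div 2"
    and light: "measure_pmf.prob (f P) S \<le> 1/2"
    by (metis block_profile.obtain_light_block)
  then interpret block_instance C S T L P \<alpha>
    using assms(4,5) by (intro block_instance.intro block_instance_axioms.intro)
  have opt_pos: "0 < opt_SC C P block_dist"
    using assms(3) card_S by (simp add: opt_SC_block_dist)
  have "B * opt_SC C P block_dist
        < ((3 + \<alpha>) / 2 - (1 - \<alpha>) / (2 * real (card S))) * opt_SC C P block_dist"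
    using B opt_pos card_S by (simp add: floor_even_def)
  also have "\<dots> \<le> measure_pmf.expectation (f P) (SC P block_dist)"
    using assms(6) valid light by (intro expectation_SC_ge) auto
  finally show "\<exists>P d. valid_profile C P \<and> P \<noteq> [] \<and>
                 distance_on (points C (length P)) d \<and>
                 consistent P d \<and> decisive \<alpha> C P d \<and>
                 opt_SC C P d > 0 \<and>
                 measure_pmf.expectation (f P) (SC P d) > B * opt_SC C P d"
    using valid profile_nonempty distance_on_block_dist consistent_block_dist
      decisive_block_dist opt_pos by blast
qed

end
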